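(* Let $\mathcal{M}$ be a Ptolemy Möbius structure on a set $X$. Then there exists a bounded metric $d\in\mathcal{M}$, i.e. $d\in\mathcal{M}$ with $\Omega(d)=\emptyset$ and $\sup_{x,y\in X}d(x,y)<\infty$.
   Context: An extended metric on a set $X$ (with at least two points) is a map $d:X\times X\to[0,\infty]$ such that for some subset $\Omega(d)\subset X$ with at most one element, $d$ is a finite metric on $X\setminus\Omega(d)$, $d(x,\omega)=\infty$ for $x\notin\Omega(d)$, $\omega\in\Omega(d)$, and $d(\omega,\omega)=0$ ($\omega$ is written $\infty$). A quadruple is admissible if no entry occurs three or four times. $\mathrm{crt}(x,y,z,w)=(d(x,y)d(z,w):d(x,z)d(y,w):d(x,w)d(y,z))\in\mathbb{R}P^2$, with $\mathrm{crt}(x,y,z,\infty)=(d(x,y):d(x,z):d(y,z))$ and $\mathrm{crt}(x,y,\infty,\infty)=(0:1:1)$ (analogously for other positions). Extended metrics are Möbius equivalent if they have the same $\mathrm{crt}$ on all admissible quadruples; a Möbius structure is a nonempty, maximal set of pairwise Möbius equivalent extended metrics on $X$. A Möbius structure is Ptolemy if its metrics satisfy $d(x,y)d(z,w)\le d(x,z)d(y,w)+d(x,w)d(y,z)$ for all quadruples (equivalently the entries of every $\mathrm{crt}$ satisfy the triangle inequality). *)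

theory Defs
  imports "HOL-Analysis.Analysis"
begin

text \<open>The set X is the whole type 'a (assumed to have at least two points).
  Distances take values in [0,\<infinity>], modelled in ereal.\<close>

definition ext_metric_with :: "('a \<Rightarrow> 'a \<Rightarrow> ereal) \<Rightarrow> 'a set \<Rightarrow> bool" where
  "ext_metric_with d \<Omega> \<longleftrightarrow>
     (\<Omega> = {} \<or> (\<exists>\<omega>. \<Omega> = {\<omega>})) \<and>
     (\<forall>x y. x \<notin> \<Omega> \<longrightarrow> y \<notin> \<Omega> \<longrightarrow>
        0 \<le> d x y \<and> d x y < \<infinity> \<and> (d x y = 0 \<longleftrightarrow> x = y) \<and> d x y = d y x) \<and>
     (\<forall>x y z. x \<notin> \<Omega> \<longrightarrow> y \<notin> \<Omega> \<longrightarrow> z \<notin> \<Omega> \<longrightarrow> d x z \<le> d x y + d y z) \<and>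
     (\<forall>x \<omega>. x \<notin> \<Omega> \<longrightarrow> \<omega> \<in> \<Omega> \<longrightarrow> d x \<omega> = \<infinity> \<and> d \<omega> x = \<infinity>) \<and>
     (\<forall>\<omega>\<in>\<Omega>. d \<omega> \<omega> = 0)"

definition extended_metric :: "('a \<Rightarrow> 'a \<Rightarrow> ereal) \<Rightarrow> bool" where
  "extended_metric d \<longleftrightarrow> (\<exists>\<Omega>. ext_metric_with d \<Omega>)"

definition Omega :: "('a \<Rightarrow> 'a \<Rightarrow> ereal) \<Rightarrow> 'a set" where
  "Omega d = (THE \<Omega>. ext_metric_with d \<Omega>)"

text \<open>Distance used in cross ratios: factors involving the infinite point are
  cancelled (replaced by 1), and d(\<infinity>,\<infinity>)=0; this reproduces
  crt(x,y,z,\<infinity>) = (d(x,y):d(x,z):d(y,z)) and crt(x,y,\<infinity>,\<infinity>) = (0:1:1), etc.\<close>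
definition crt_dist :: "('a \<Rightarrow> 'a \<Rightarrow> ereal) \<Rightarrow> 'a \<Rightarrow> 'a \<Rightarrow> real" where
  "crt_dist d x y =
     (if x = y then 0 else if x \<in> Omega d \<or> y \<in> Omega d then 1 else real_of_ereal (d x y))"

definition crt :: "('a \<Rightarrow> 'a \<Rightarrow> ereal) \<Rightarrow> 'a \<Rightarrow> 'a \<Rightarrow> 'a \<Rightarrow> 'a \<Rightarrow> real \<times> real \<times> real" where
  "crt d x y z w =
     (crt_dist d x y * crt_dist d z w, crt_dist d x z * crt_dist d y w,
      crt_dist d x w * crt_dist d y z)"

definition proj_eq :: "real \<times> real \<times> real \<Rightarrow> real \<times> real \<times> real \<Rightarrow> bool" where
  "proj_eq p q \<longleftrightarrow> p \<noteq> (0,0,0) \<and> q \<noteq> (0,0,0) \<and>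
     (\<exists>t. t \<noteq> 0 \<and> fst q = t * fst p \<and> fst (snd q) = t * fst (snd p) \<and>
          snd (snd q) = t * snd (snd p))"

definition admissible :: "'a \<Rightarrow> 'a \<Rightarrow> 'a \<Rightarrow> 'a \<Rightarrow> bool" where
  "admissible x y z w \<longleftrightarrow>
     \<not> (x = y \<and> y = z) \<and> \<not> (x = y \<and> y = w) \<and> \<not> (x = z \<and> z = w) \<and> \<not> (y = z \<and> z = w)"

definition mobius_equiv :: "('a \<Rightarrow> 'a \<Rightarrow> ereal) \<Rightarrow> ('a \<Rightarrow> 'a \<Rightarrow> ereal) \<Rightarrow> bool" where
  "mobius_equiv d d' \<longleftrightarrow>
     (\<forall>x y z w. admissible x y z w \<longrightarrow> proj_eq (crt d x y z w) (crt d' x y z w))"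

definition mobius_structure :: "('a \<Rightarrow> 'a \<Rightarrow> ereal) set \<Rightarrow> bool" where
  "mobius_structure M \<longleftrightarrow>
     M \<noteq> {} \<and> (\<forall>d\<in>M. extended_metric d) \<and>
     (\<forall>d\<in>M. \<forall>d'\<in>M. mobius_equiv d d') \<and>
     (\<forall>d. extended_metric d \<and> (\<forall>d'\<in>M. mobius_equiv d d') \<longrightarrow> d \<in> M)"

definition ptolemy_mobius_structure :: "('a \<Rightarrow> 'a \<Rightarrow> ereal) set \<Rightarrow> bool" where
  "ptolemy_mobius_structure M \<longleftrightarrow>
     mobius_structure M \<and>
     (\<forall>d\<in>M. \<forall>x y z w. admissible x y z w \<longrightarrow>
        (case crt d x y z w of (a, b, c) \<Rightarrow> a \<le> b + c \<and> b \<le> a + c \<and> c \<le> a + b))"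

end

theory Submission
  imports Defs
begin

text \<open>Pick any metric d of the structure and put D = crt_dist d, so D is a finite semi-metric
  satisfying the Ptolemy inequality. Fixing two points u \<noteq> v and the weight
  f y = D(y,u) + D(y,v) > 0, the rescaled function D(x,y) / (f x f y) is a metric: its triangle
  inequality is the sum of the Ptolemy inequalities for (x,z,y,u) and (x,z,y,v). The Ptolemy
  inequality for (x,y,u,v) bounds it by 1 / D(u,v). Rescaling each point by a nonzero factor
  multiplies every cross ratio by a nonzero constant, so the new metric is Moebius equivalent
  to d and lies in the structure by maximality.\<close>

lemma ext_metric_with_sym:
  assumes "ext_metric_with d \<Omega>"
  shows "d x y = d y x"
  using assms unfolding ext_metric_with_def by (cases "x \<in> \<Omega>"; cases "y \<in> \<Omega>") auto

lemma ext_metric_with_nonneg: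
  assumes "ext_metric_with d \<Omega>"
  shows "0 \<le> d x y"
  using assms unfolding ext_metric_with_def by (cases "x \<in> \<Omega>"; cases "y \<in> \<Omega>") auto

lemma Omega_eq_empty:
  fixes d :: "'a \<Rightarrow> 'a \<Rightarrow> ereal" and x y :: 'a
  assumes "ext_metric_with d {}" and "x \<noteq> y"
  shows "Omega d = {}"
  unfolding Omega_def
proof (rule the_equality)
  fix \<Omega> assume \<Omega>: "ext_metric_with d \<Omega>"
  show "\<Omega> = {}"
  proof (rule ccontr)
    assume "\<Omega> \<noteq> {}"
    moreover have "\<Omega> = {} \<or> (\<exists>\<omega>. \<Omega> = {\<omega>})"
      using \<Omega> unfolding ext_metric_with_def by (rule conjunct1)
    ultimately obtain \<omega> where \<omega>: "\<Omega> = {\<omega>}" by blast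
    obtain z where "z \<noteq> \<omega>" using assms(2) by (cases "x = \<omega>") (auto simp: eq_commute)
    then have "d z \<omega> = \<infinity>" using \<Omega> \<omega> unfolding ext_metric_with_def by blast
    then show False using assms(1) unfolding ext_metric_with_def by auto
  qed
qed (rule assms(1))

lemma crt_dist_sym:
  assumes "extended_metric d"
  shows "crt_dist d x y = crt_dist d y x"
  using assms ext_metric_with_sym[of d _ x y]
  unfolding extended_metric_def crt_dist_def by auto

lemma crt_dist_nonneg:
  assumes "extended_metric d"
  shows "0 \<le> crt_dist d x y"
  using assms ext_metric_with_nonneg[of d _ x y]
  unfolding extended_metric_def crt_dist_def by (auto simp: real_of_ereal_pos)

lemma proj_eq_scale_left:
  assumes "proj_eq (a, b, c) q" and "k \<noteq> 0"
  shows "proj_eq (k * a, k * b, k * c) q"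
proof -
  obtain t where "t \<noteq> 0" "fst q = t * a" "fst (snd q) = t * b" "snd (snd q) = t * c"
    using assms(1) unfolding proj_eq_def by auto
  then show ?thesis
    using assms unfolding proj_eq_def by (intro conjI exI[of _ "t / k"]) auto
qed

lemma mobius_equiv_conformal_change:
  assumes conformal: "\<And>x y. crt_dist d' x y = g x * g y * crt_dist d x y"
    and g: "\<And>x. g x \<noteq> 0"
    and "mobius_equiv d d''"
  shows "mobius_equiv d' d''"
  unfolding mobius_equiv_def
proof (intro allI impI)
  fix x y z w :: 'a
  assume "admissible x y z w"
  then have "proj_eq (crt d x y z w) (crt d'' x y z w)"
    using assms(3) unfolding mobius_equiv_def by blast
  then have "proj_eq (let k = g x * g y * g z * g w in
      (k * (crt_dist d x y * crt_dist d z w), k * (crt_dist d x z * crt_dist d y w),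
       k * (crt_dist d x w * crt_dist d y z))) (crt d'' x y z w)"
    unfolding Let_def crt_def by (rule proj_eq_scale_left) (simp add: g)
  then show "proj_eq (crt d' x y z w) (crt d'' x y z w)"
    by (simp add: crt_def conformal ac_simps)
qed

lemma mobius_structure_conformal_change:
  assumes "mobius_structure M" and "d \<in> M" and "extended_metric d'"
    and "\<And>x y. crt_dist d' x y = g x * g y * crt_dist d x y" and "\<And>x. g x \<noteq> 0"
  shows "d' \<in> M"
  using assms mobius_equiv_conformal_change[of d' g d]
  unfolding mobius_structure_def by blast

locale ptolemy_semimetric =
  fixes D :: "'a \<Rightarrow> 'a \<Rightarrow> real"
  assumes zero [simp]: "D x x = 0"
    and pos: "x \<noteq> y \<Longrightarrow> 0 < D x y"
    and sym: "D x y = D y x"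
    and ptolemy: "admissible x y z w \<Longrightarrow> D x y * D z w \<le> D x z * D y w + D x w * D y z"
begin

lemma nonneg: "0 \<le> D x y"
  using pos[of x y] by (cases "x = y") auto

lemma ptolemy_three_points: "D x z * D y u \<le> D x y * D z u + D y z * D x u"
proof (cases "x = z \<or> x = y \<or> y = z")
  case True
  then show ?thesis
    using nonneg[of x y] nonneg[of y z] nonneg[of z u] nonneg[of x u] by (auto simp: sym)
next
  case False
  then have "admissible x z y u" by (auto simp: admissible_def)
  from ptolemy[OF this] show ?thesis by (simp add: sym mult.commute)
qed

definition weight :: "'a \<Rightarrow> 'a \<Rightarrow> 'a \<Rightarrow> real" where
  "weight u v y = D y u + D y v"

definition rescaled :: "'a \<Rightarrow> 'a \<Rightarrow> 'a \<Rightarrow> 'a \<Rightarrow> real" where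
  "rescaled u v x y = D x y / (weight u v x * weight u v y)"

context
  fixes u v :: 'a
  assumes uv: "u \<noteq> v"
begin

lemma weight_pos: "0 < weight u v y"
  using uv pos[of y u] pos[of y v] nonneg[of y u] nonneg[of y v]
  unfolding weight_def by (cases "y = u") auto

lemma rescaled_nonneg: "0 \<le> rescaled u v x y"
  unfolding rescaled_def using nonneg[of x y] weight_pos[of x] weight_pos[of y] by simp

lemma rescaled_eq_0_iff: "rescaled u v x y = 0 \<longleftrightarrow> x = y"
  unfolding rescaled_def using pos[of x y] weight_pos[of x] weight_pos[of y]
  by (cases "x = y") auto

lemma rescaled_sym: "rescaled u v x y = rescaled u v y x"
  unfolding rescaled_def by (simp add: sym mult.commute)

lemma rescaled_triangle: "rescaled u v x z \<le> rescaled u v x y + rescaled u v y z"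
proof -
  have "D x z * weight u v y \<le> D x y * weight u v z + D y z * weight u v x"
    using ptolemy_three_points[of x z y u] ptolemy_three_points[of x z y v]
    by (simp add: weight_def algebra_simps)
  then have "D x z * weight u v y / (weight u v x * weight u v y * weight u v z)
      \<le> (D x y * weight u v z + D y z * weight u v x)
          / (weight u v x * weight u v y * weight u v z)"
    using weight_pos[of x] weight_pos[of y] weight_pos[of z] by (intro divide_right_mono) auto
  then show ?thesis
    using weight_pos[of x] weight_pos[of y] weight_pos[of z]
    by (simp add: rescaled_def field_simps)
qed

lemma rescaled_le: "rescaled u v x y \<le> 1 / D u v"
proof (cases "x = y")
  case True
  then show ?thesis using pos[OF uv] by (simp add: rescaled_def)
next
  case False
  then have "admissible x y u v" using uv by (auto simp: admissible_def)
  then have "D x y * D u v \<le> D x u * D y v + D x v * D y u" by (rule ptolemy)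
  also have "\<dots> \<le> weight u v x * weight u v y"
    using nonneg[of x u] nonneg[of y v] nonneg[of x v] nonneg[of y u]
    by (simp add: weight_def algebra_simps)
  finally show ?thesis
    using weight_pos[of x] weight_pos[of y] pos[OF uv] by (simp add: rescaled_def field_simps)
qed

lemma ext_metric_with_rescaled: "ext_metric_with (\<lambda>x y. ereal (rescaled u v x y)) {}"
  unfolding ext_metric_with_def
  using rescaled_nonneg rescaled_eq_0_iff by (auto intro: rescaled_sym rescaled_triangle)

end

end

lemma ptolemy_semimetric_crt_dist:
  assumes "ptolemy_mobius_structure M" and "d \<in> M"
  shows "ptolemy_semimetric (crt_dist d)"
proof
  have "mobius_structure M" using assms(1) unfolding ptolemy_mobius_structure_def by blast
  then have d: "extended_metric d" "mobius_equiv d d"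
    using assms(2) unfolding mobius_structure_def by blast+
  show zero: "crt_dist d x x = 0" for x by (simp add: crt_dist_def)
  show "crt_dist d x y = crt_dist d y x" for x y by (rule crt_dist_sym[OF d(1)])
  show "admissible x y z w \<Longrightarrow> crt_dist d x y * crt_dist d z w
      \<le> crt_dist d x z * crt_dist d y w + crt_dist d x w * crt_dist d y z" for x y z w
    using assms unfolding ptolemy_mobius_structure_def crt_def by auto
  show "0 < crt_dist d x y" if "x \<noteq> y" for x y
  proof -
    have "admissible x y x y" using that by (auto simp: admissible_def)
    \<comment> \<open>the cross ratio of (x,y,x,y) is (D(x,y)^2 : 0 : D(x,y)^2), which must be a point of RP^2\<close>
    then have "crt d x y x y \<noteq> (0, 0, 0)"
      using d(2) unfolding mobius_equiv_def proj_eq_def by blast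
    then have "crt_dist d x y \<noteq> 0" by (auto simp: crt_def zero)
    then show ?thesis using crt_dist_nonneg[OF d(1), of x y] by simp
  qed
qed

theorem lemma2p3:
  fixes M :: "('a \<Rightarrow> 'a \<Rightarrow> ereal) set"
  assumes "\<exists>x y :: 'a. x \<noteq> y"
    and "ptolemy_mobius_structure M"
  shows "\<exists>d\<in>M. Omega d = {} \<and> (SUP p\<in>UNIV. d (fst p) (snd p)) < \<infinity>"
proof -
  have M: "mobius_structure M" using assms(2) unfolding ptolemy_mobius_structure_def by blast
  then obtain d where "d \<in> M" unfolding mobius_structure_def by blast
  interpret D: ptolemy_semimetric "crt_dist d"
    using ptolemy_semimetric_crt_dist[OF assms(2) \<open>d \<in> M\<close>] .
  obtain u v :: 'a where uv: "u \<noteq> v" using assms(1) by blast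
  define d' where "d' x y = ereal (D.rescaled u v x y)" for x y
  have d': "ext_metric_with d' {}"
    unfolding d'_def using D.ext_metric_with_rescaled[OF uv] by simp
  have Omega: "Omega d' = {}" using Omega_eq_empty[OF d' uv] .
  have "d' \<in> M"
  proof (rule mobius_structure_conformal_change[OF M \<open>d \<in> M\<close>])
    show "extended_metric d'" using d' unfolding extended_metric_def by blast
    show "crt_dist d' x y = inverse (D.weight u v x) * inverse (D.weight u v y) * crt_dist d x y"
      for x y by (simp add: crt_dist_def Omega d'_def D.rescaled_def field_simps)
    show "inverse (D.weight u v x) \<noteq> 0" for x using D.weight_pos[OF uv, of x] by simp
  qed
  moreover have "(SUP p\<in>UNIV. d' (fst p) (snd p)) \<le> ereal (1 / crt_dist d u v)"
    by (rule SUP_least) (simp add: d'_def D.rescaled_le[OF uv])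
  ultimately show ?thesis using Omega by (auto intro: le_less_trans)
qed

end
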